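(* Let $\mathbb{X}$ be a finite dimensional real Banach space and $T,A\in\mathbb{B}(\mathbb{X})$. Then $T\perp_B A$ if and only if there exist $x,y\in M_T$ such that $Ax\in(Tx)^+$ and $Ay\in(Ty)^-$.
   Context: $\mathbb{B}(\mathbb{X})$ is the space of bounded linear operators on $\mathbb{X}$ with the operator norm. $S_{\mathbb{X}}$ is the unit sphere and $M_T=\{x\in S_{\mathbb{X}}:\|Tx\|=\|T\|\}$. For elements $u,v$ of a normed space, $u\perp_B v$ (Birkhoff–James orthogonality) means $\|u+\lambda v\|\ge\|u\|$ for all $\lambda\in\mathbb{R}$; $v\in u^+$ means $\|u+\lambda v\|\ge\|u\|$ for all $\lambda\ge0$; $v\in u^-$ means $\|u+\lambda v\|\ge\|u\|$ for all $\lambda\le 0$. *)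

theory Defs
  imports "HOL-Analysis.Analysis"
begin

definition bj_orth :: "'b::real_normed_vector \<Rightarrow> 'b \<Rightarrow> bool" where
  "bj_orth u v \<longleftrightarrow> (\<forall>t::real. norm (u + t *\<^sub>R v) \<ge> norm u)"

definition bj_plus :: "'b::real_normed_vector \<Rightarrow> 'b set" where
  "bj_plus u = {v. \<forall>t::real. t \<ge> 0 \<longrightarrow> norm (u + t *\<^sub>R v) \<ge> norm u}"

definition bj_minus :: "'b::real_normed_vector \<Rightarrow> 'b set" where
  "bj_minus u = {v. \<forall>t::real. t \<le> 0 \<longrightarrow> norm (u + t *\<^sub>R v) \<ge> norm u}"

definition norm_attain :: "('a::real_normed_vector \<Rightarrow>\<^sub>L 'a) \<Rightarrow> 'a set" where
  "norm_attain T = {x. norm x = 1 \<and> norm (blinfun_apply T x) = norm T}"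

end

theory Submission imports Defs begin

text \<open>
  If \<open>x, y \<in> M\<^sub>T\<close> witness \<open>A x \<in> (T x)\<^sup>+\<close> and \<open>A y \<in> (T y)\<^sup>-\<close>, then
  \<open>\<parallel>T + t A\<parallel> \<ge> \<parallel>T x + t A x\<parallel> \<ge> \<parallel>T\<parallel>\<close> for \<open>t \<ge> 0\<close>, and likewise with \<open>y\<close> for \<open>t \<le> 0\<close>.
  Conversely, let \<open>T \<perp>\<^sub>B A\<close>. For \<open>\<mu> > 0\<close> the closed sets
  \<open>S\<^sub>\<mu> = {x \<in> S\<^sub>X. \<parallel>T\<parallel> \<le> \<parallel>T x + \<mu> A x\<parallel>}\<close> are nonempty (they contain the norm
  attainers of \<open>T + \<mu> A\<close>) and decrease as \<open>\<mu> \<downarrow> 0\<close> by convexity of \<open>t \<mapsto> \<parallel>T x + t A x\<parallel>\<close>.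
  As the unit sphere is compact in finite dimension, they have a common point \<open>x\<close>;
  letting \<open>\<mu> \<rightarrow> 0\<close> gives \<open>x \<in> M\<^sub>T\<close>, and then \<open>A x \<in> (T x)\<^sup>+\<close>. Applying this to \<open>-A\<close>
  produces \<open>y\<close>.
  The unit sphere is compact because, for a finite basis, the norm dominates a multiple of the
  \<open>\<ell>\<^sup>1\<close> norm of the coordinates (a continuous function attains a positive minimum on the
  compact \<open>\<ell>\<^sup>1\<close> unit sphere of coordinates), so the sphere is a closed subset of the
  continuous image of a coordinate box.
\<close>

lemma independent_finite_norm_sum_lower_bound:
  fixes B :: "'a::real_normed_vector set"
  assumes "finite B" and "independent B"
  obtains m where "m > 0" and "\<And>u. m * (\<Sum>v\<in>B. \<bar>u v\<bar>) \<le> norm (\<Sum>v\<in>B. u v *\<^sub>R v)"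
proof -
  define f :: "('a \<Rightarrow> real) \<Rightarrow> 'a" where "f u = (\<Sum>v\<in>B. u v *\<^sub>R v)" for u
  define g :: "('a \<Rightarrow> real) \<Rightarrow> real" where "g u = (\<Sum>v\<in>B. \<bar>u v\<bar>)" for u
  define Z where "Z = PiE UNIV (\<lambda>v. if v \<in> B then {-1..1} else {0::real}) \<inter> {u. g u = 1}"
  have "compactin (product_topology (\<lambda>_. euclidean) UNIV)
          (PiE UNIV (\<lambda>v. if v \<in> B then {-1..1} else {0::real}))"
    by (subst compactin_PiE) auto
  then have "compact Z"
    unfolding Z_def g_def euclidean_product_topology compactin_euclidean_iff
    by (intro compact_Int_closed closed_Collect_eq continuous_intros) auto
  have f_nonzero: "f u \<noteq> 0" if "u \<in> Z" for u
  proof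
    assume "f u = 0"
    moreover have "\<exists>v\<in>B. u v \<noteq> 0"
    proof (rule ccontr)
      assume "\<not> (\<exists>v\<in>B. u v \<noteq> 0)"
      then have "g u = 0" by (simp add: g_def)
      with that show False by (simp add: Z_def)
    qed
    ultimately have "dependent B"
      using \<open>finite B\<close> by (auto simp: dependent_finite f_def)
    then show False using \<open>independent B\<close> by simp
  qed
  obtain m where "m > 0" and m: "\<And>u. u \<in> Z \<Longrightarrow> m \<le> norm (f u)"
  proof (cases "Z = {}")
    case False
    have "continuous_on UNIV (\<lambda>u. norm (f u))"
      unfolding f_def by (intro continuous_intros) auto
    then obtain u0 where "u0 \<in> Z" "\<And>u. u \<in> Z \<Longrightarrow> norm (f u0) \<le> norm (f u)"
      using continuous_attains_inf[OF \<open>compact Z\<close> False] continuous_on_subset by blast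
    with f_nonzero show ?thesis using that[of "norm (f u0)"] by auto
  qed (use that[of 1] in auto)
  have "m * g u \<le> norm (f u)" for u
  proof -
    have "m * g u \<le> norm (f u)" if "g u > 0"
    proof -
      define w where "w v = (if v \<in> B then u v / g u else 0)" for v
      have "g w = 1"
        using that by (simp add: g_def w_def abs_div sum_divide_distrib[symmetric])
      moreover have "w v \<in> (if v \<in> B then {-1..1} else {0})" for v
      proof (cases "v \<in> B")
        case True
        then have "\<bar>u v\<bar> \<le> g u"
          unfolding g_def using member_le_sum[of v B "\<lambda>v. \<bar>u v\<bar>"] \<open>finite B\<close> by simp
        with True that show ?thesis
          by (simp add: w_def abs_le_iff field_simps)
      qed (simp add: w_def)
      ultimately have "w \<in> Z"
        by (simp add: Z_def PiE_UNIV_domain)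
      moreover have "f w = (1 / g u) *\<^sub>R f u"
        by (simp add: f_def w_def scaleR_sum_right)
      ultimately have "m \<le> norm (f u) / g u"
        using m[of w] that by simp
      then show ?thesis using that by (simp add: field_simps)
    qed
    moreover have "g u \<ge> 0" by (simp add: g_def sum_nonneg)
    ultimately show ?thesis by fastforce
  qed
  with \<open>m > 0\<close> show ?thesis
    using that unfolding f_def g_def by blast
qed

lemma compact_sphere_if_finite_span:
  assumes "finite B0" and "span B0 = (UNIV :: 'a::real_normed_vector set)"
  shows "compact (sphere (0::'a) 1)"
proof -
  obtain B where "B \<subseteq> B0" and "independent B" and "B0 \<subseteq> span B"
    by (rule maximal_independent_subset)
  have "finite B"
    using \<open>B \<subseteq> B0\<close> assms(1) by (rule finite_subset)
  have span_B: "span B = UNIV"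
    using span_minimal[OF \<open>B0 \<subseteq> span B\<close> subspace_span] assms(2) by auto
  obtain m where "m > 0" and m: "\<And>u. m * (\<Sum>v\<in>B. \<bar>u v\<bar>) \<le> norm (\<Sum>v\<in>B. u v *\<^sub>R v)"
    using independent_finite_norm_sum_lower_bound[OF \<open>finite B\<close> \<open>independent B\<close>] by blast
  define f :: "('a \<Rightarrow> real) \<Rightarrow> 'a" where "f u = (\<Sum>v\<in>B. u v *\<^sub>R v)" for u
  define K where "K = PiE UNIV (\<lambda>v. if v \<in> B then {-1/m..1/m} else {0::real})"
  have "compactin (product_topology (\<lambda>_. euclidean) UNIV) K"
    unfolding K_def by (subst compactin_PiE) auto
  moreover have "continuous_on UNIV f"
    unfolding f_def by (intro continuous_intros) auto
  ultimately have "compact (f ` K)"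
    unfolding euclidean_product_topology compactin_euclidean_iff
    by (metis compact_continuous_image continuous_on_subset subset_UNIV)
  moreover have "sphere 0 1 \<subseteq> f ` K"
  proof
    fix x :: 'a assume "x \<in> sphere 0 1"
    obtain u where x: "x = (\<Sum>v\<in>B. u v *\<^sub>R v)"
      using span_finite[OF \<open>finite B\<close>] span_B by auto
    define u' where "u' v = (if v \<in> B then u v else 0)" for v
    have "f u' = x"
      unfolding f_def u'_def x by (rule sum.cong) auto
    have coeff_bound: "\<bar>u' v\<bar> \<le> 1 / m" for v
    proof (cases "v \<in> B")
      case True
      have "m * \<bar>u' v\<bar> \<le> m * (\<Sum>w\<in>B. \<bar>u' w\<bar>)"
        using member_le_sum[OF True, of "\<lambda>w. \<bar>u' w\<bar>"] \<open>finite B\<close> \<open>m > 0\<close> by simp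
      also have "\<dots> \<le> 1"
        using m[of u'] \<open>f u' = x\<close> \<open>x \<in> sphere 0 1\<close> by (simp add: f_def)
      finally show ?thesis using \<open>m > 0\<close> by (simp add: field_simps)
    qed (use \<open>m > 0\<close> in \<open>simp add: u'_def\<close>)
    have "u' v \<in> (if v \<in> B then {-1/m..1/m} else {0})" for v
      using coeff_bound[of v] by (auto simp: u'_def abs_le_iff)
    then have "u' \<in> K"
      by (simp add: K_def PiE_UNIV_domain)
    with \<open>f u' = x\<close> show "x \<in> f ` K" by blast
  qed
  moreover have "closed (sphere (0::'a) 1)"
    unfolding sphere_def by (intro closed_Collect_eq continuous_intros)
  ultimately have "compact (f ` K \<inter> sphere 0 1)"
    by (intro compact_Int_closed)
  moreover have "f ` K \<inter> sphere 0 1 = sphere 0 1"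
    using \<open>sphere 0 1 \<subseteq> f ` K\<close> by blast
  ultimately show ?thesis by simp
qed

lemma norm_blinfun_attained:
  fixes F :: "'a::real_normed_vector \<Rightarrow>\<^sub>L 'b::real_normed_vector"
  assumes "compact (sphere (0::'a) 1)" and "(UNIV :: 'a set) \<noteq> {0}"
  obtains x where "norm x = 1" and "norm (F x) = norm F"
proof -
  obtain z :: 'a where "z \<noteq> 0" using assms(2) by auto
  then have "sphere (0::'a) 1 \<noteq> {}"
    using norm_sgn[of z] by (metis empty_iff mem_sphere_0)
  moreover have "continuous_on (sphere 0 1) (\<lambda>x. norm (F x))"
    by (intro continuous_intros)
  ultimately obtain x where x: "x \<in> sphere 0 1" and max: "\<And>y. y \<in> sphere 0 1 \<Longrightarrow> norm (F y) \<le> norm (F x)"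
    using continuous_attains_sup[OF assms(1)] by metis
  have "norm F \<le> norm (F x)"
  proof (rule norm_blinfun_bound)
    fix y :: 'a
    show "norm (F y) \<le> norm (F x) * norm y"
    proof (cases "y = 0")
      case False
      have "F y = norm y *\<^sub>R F (sgn y)"
        using False by (simp add: sgn_div_norm blinfun.scaleR_right)
      with max[of "sgn y"] False show ?thesis
        by (simp add: norm_sgn mult.commute mult_left_mono)
    qed simp
  qed simp
  moreover have "norm (F x) \<le> norm F"
    using norm_blinfun[of F x] x by simp
  ultimately show ?thesis using that x by simp
qed

lemma norm_add_scaleR_ge_mono:
  fixes u v :: "'a::real_normed_vector"
  assumes "norm u \<le> N" and "N \<le> norm (u + l *\<^sub>R v)" and "0 < l" and "l \<le> \<mu>"
  shows "N \<le> norm (u + \<mu> *\<^sub>R v)"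
proof -
  have "\<mu> > 0"
    using assms by simp
  define s where "s = l / \<mu>"
  have "0 < s" "s \<le> 1"
    using assms \<open>\<mu> > 0\<close> by (simp_all add: s_def)
  have "u + l *\<^sub>R v = (1 - s) *\<^sub>R u + s *\<^sub>R (u + \<mu> *\<^sub>R v)"
    using \<open>\<mu> > 0\<close> by (simp add: s_def algebra_simps)
  with assms(2) have "N \<le> norm ((1 - s) *\<^sub>R u + s *\<^sub>R (u + \<mu> *\<^sub>R v))"
    by simp
  also have "\<dots> \<le> norm ((1 - s) *\<^sub>R u) + norm (s *\<^sub>R (u + \<mu> *\<^sub>R v))"
    by (rule norm_triangle_ineq)
  also have "\<dots> = (1 - s) * norm u + s * norm (u + \<mu> *\<^sub>R v)"
    using \<open>0 < s\<close> \<open>s \<le> 1\<close> by simp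
  also have "\<dots> \<le> (1 - s) * N + s * norm (u + \<mu> *\<^sub>R v)"
    using assms(1) \<open>s \<le> 1\<close> by (simp add: mult_left_mono)
  finally show ?thesis
    using \<open>0 < s\<close> by (simp add: algebra_simps)
qed

lemma bj_minus_iff_uminus_bj_plus: "v \<in> bj_minus u \<longleftrightarrow> -v \<in> bj_plus u"
proof -
  have "(\<forall>t::real. t \<le> 0 \<longrightarrow> P t) \<longleftrightarrow> (\<forall>t. t \<ge> 0 \<longrightarrow> P (-t))" for P
    by (metis minus_minus neg_0_le_iff_le)
  from this[of "\<lambda>t. norm u \<le> norm (u + t *\<^sub>R v)"] show ?thesis
    unfolding bj_minus_def bj_plus_def by simp
qed

lemma bj_orth_uminus: "bj_orth u (-v) \<longleftrightarrow> bj_orth u v"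
proof -
  have "(\<forall>t::real. P t) \<longleftrightarrow> (\<forall>t. P (-t))" for P
    by (metis minus_minus)
  from this[of "\<lambda>t. norm u \<le> norm (u + t *\<^sub>R v)"] show ?thesis
    unfolding bj_orth_def by simp
qed

lemma bj_orth_if_attained_bj_plus_bj_minus:
  fixes T A :: "'a::real_normed_vector \<Rightarrow>\<^sub>L 'a"
  assumes "x \<in> norm_attain T" and "A x \<in> bj_plus (T x)"
    and "y \<in> norm_attain T" and "A y \<in> bj_minus (T y)"
  shows "bj_orth T A"
  unfolding bj_orth_def
proof
  fix t :: real
  have attained: "norm T \<le> norm (T + t *\<^sub>R A)"
    if "z \<in> norm_attain T" and "norm (T z) \<le> norm (T z + t *\<^sub>R A z)" for z
    using that norm_blinfun[of "T + t *\<^sub>R A" z]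
    by (simp add: norm_attain_def blinfun.add_left blinfun.scaleR_left)
  show "norm T \<le> norm (T + t *\<^sub>R A)"
  proof (cases "t \<ge> 0")
    case True
    with assms(1,2) show ?thesis by (intro attained) (auto simp: bj_plus_def)
  next
    case False
    with assms(3,4) show ?thesis by (intro attained) (auto simp: bj_minus_def)
  qed
qed

lemma bj_orth_imp_attained_bj_plus:
  fixes T A :: "'a::real_normed_vector \<Rightarrow>\<^sub>L 'a"
  assumes "compact (sphere (0::'a) 1)" and "(UNIV :: 'a set) \<noteq> {0}"
    and "bj_orth T A"
  obtains x where "x \<in> norm_attain T" and "A x \<in> bj_plus (T x)"
proof -
  define S where "S \<mu> = {x. norm T \<le> norm (T x + \<mu> *\<^sub>R A x)}" for \<mu> :: real
  have "sphere 0 1 \<inter> (\<Inter>\<mu>\<in>{0<..}. S \<mu>) \<noteq> {}"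
  proof (rule compact_imp_fip_image[OF assms(1)])
    show "closed (S \<mu>)" for \<mu>
      unfolding S_def by (intro closed_Collect_le continuous_intros)
    fix I :: "real set" assume "finite I" and "I \<subseteq> {0<..}"
    show "sphere 0 1 \<inter> (\<Inter>\<mu>\<in>I. S \<mu>) \<noteq> {}"
    proof (cases "I = {}")
      case True
      obtain z :: 'a where "z \<noteq> 0"
        using assms(2) by auto
      then have "sgn z \<in> sphere 0 1"
        by (simp add: norm_sgn)
      with True show ?thesis by auto
    next
      case False
      define l where "l = Min I"
      have "l \<in> I" and l_le: "\<And>\<mu>. \<mu> \<in> I \<Longrightarrow> l \<le> \<mu>"
        using \<open>finite I\<close> False by (auto simp: l_def)
      then have "l > 0" using \<open>I \<subseteq> {0<..}\<close> by auto
      obtain x where "norm x = 1" and "norm ((T + l *\<^sub>R A) x) = norm (T + l *\<^sub>R A)"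
        using norm_blinfun_attained[OF assms(1,2)] by blast
      then have "norm T \<le> norm (T x + l *\<^sub>R A x)"
        using \<open>bj_orth T A\<close> by (simp add: bj_orth_def blinfun.add_left blinfun.scaleR_left)
      moreover have "norm (T x) \<le> norm T"
        using norm_blinfun[of T x] \<open>norm x = 1\<close> by simp
      ultimately have "x \<in> S \<mu>" if "\<mu> \<in> I" for \<mu>
        unfolding S_def using norm_add_scaleR_ge_mono \<open>l > 0\<close> l_le[OF that] by blast
      with \<open>norm x = 1\<close> show ?thesis by auto
    qed
  qed
  then obtain x where "x \<in> sphere 0 1" and "\<And>\<mu>. \<mu> > 0 \<Longrightarrow> x \<in> S \<mu>"
    by blast
  then have "norm x = 1" and x: "\<And>\<mu>. \<mu> > 0 \<Longrightarrow> norm T \<le> norm (T x + \<mu> *\<^sub>R A x)"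
    by (auto simp: S_def)
  have "((\<lambda>\<mu>. norm (T x + \<mu> *\<^sub>R A x)) \<longlongrightarrow> norm (T x + 0 *\<^sub>R A x)) (at_right 0)"
    by (intro tendsto_intros)
  then have "((\<lambda>\<mu>. norm (T x + \<mu> *\<^sub>R A x)) \<longlongrightarrow> norm (T x)) (at_right 0)"
    by simp
  then have "norm T \<le> norm (T x)"
  proof (rule tendsto_lowerbound)
    show "\<forall>\<^sub>F \<mu> in at_right 0. norm T \<le> norm (T x + \<mu> *\<^sub>R A x)"
      using eventually_at_right_less[of "0::real"] by (rule eventually_mono) (rule x)
  qed simp
  moreover have "norm (T x) \<le> norm T"
    using norm_blinfun[of T x] \<open>norm x = 1\<close> by simp
  ultimately have "x \<in> norm_attain T"
    using \<open>norm x = 1\<close> by (simp add: norm_attain_def)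
  moreover have "A x \<in> bj_plus (T x)"
    using x \<open>x \<in> norm_attain T\<close>
    by (auto simp: bj_plus_def norm_attain_def order.order_iff_strict)
  ultimately show ?thesis by (rule that)
qed

theorem mainTheorem2:
  fixes T A :: "'a::banach \<Rightarrow>\<^sub>L 'a"
  assumes findim: "\<exists>B. finite B \<and> span B = (UNIV :: 'a set)"
    and nontriv: "(UNIV :: 'a set) \<noteq> {0}"
  shows "bj_orth T A \<longleftrightarrow>
    (\<exists>x\<in>norm_attain T. \<exists>y\<in>norm_attain T.
       blinfun_apply A x \<in> bj_plus (blinfun_apply T x) \<and>
       blinfun_apply A y \<in> bj_minus (blinfun_apply T y))"
proof
  have sphere: "compact (sphere (0::'a) 1)"
    using findim compact_sphere_if_finite_span by blast
  assume "bj_orth T A"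
  then obtain x where "x \<in> norm_attain T" and "A x \<in> bj_plus (T x)"
    by (rule bj_orth_imp_attained_bj_plus[OF sphere nontriv])
  from \<open>bj_orth T A\<close> have "bj_orth T (-A)"
    by (simp add: bj_orth_uminus)
  then obtain y where "y \<in> norm_attain T" and "(-A) y \<in> bj_plus (T y)"
    by (rule bj_orth_imp_attained_bj_plus[OF sphere nontriv])
  then have "A y \<in> bj_minus (T y)"
    by (simp add: bj_minus_iff_uminus_bj_plus blinfun.minus_left)
  with \<open>x \<in> norm_attain T\<close> \<open>A x \<in> bj_plus (T x)\<close> \<open>y \<in> norm_attain T\<close>
  show "\<exists>x\<in>norm_attain T. \<exists>y\<in>norm_attain T. A x \<in> bj_plus (T x) \<and> A y \<in> bj_minus (T y)"
    by blast
next
  assume "\<exists>x\<in>norm_attain T. \<exists>y\<in>norm_attain T. A x \<in> bj_plus (T x) \<and> A y \<in> bj_minus (T y)"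
  then show "bj_orth T A"
    using bj_orth_if_attained_bj_plus_bj_minus by blast
qed

end
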